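(* Let $X=(\mathbb C^\times)^3$ with coordinates $x=(x_{22},x_{11},x_{21})$. For $c\in\mathbb C^\times$ put $c_2=\dfrac{c\,x_{21}x_{22}+x_{11}^2}{x_{21}x_{22}+x_{11}^2}$ and define $$e_0^c(x)=\Big(\tfrac{c_2}{c}x_{22},\ \tfrac{x_{11}}{c},\ \tfrac{x_{21}}{c_2}\Big),\quad e_1^c(x)=(x_{22},\,c\,x_{11},\,x_{21}),\quad e_2^c(x)=\Big(c_2x_{22},\ x_{11},\ \tfrac{c}{c_2}x_{21}\Big),$$ $$\varepsilon_0(x)=x_{21}+\frac{x_{11}^2}{x_{22}},\quad \varepsilon_1(x)=\frac{x_{22}}{x_{11}},\quad \varepsilon_2(x)=\frac{x_{21}x_{22}+x_{11}^2}{x_{22}^2x_{21}},$$ $$\gamma_0(x)=\frac1{x_{11}^2},\quad \gamma_1(x)=\frac{x_{11}^2}{x_{21}x_{22}},\quad \gamma_2(x)=\frac{x_{21}^2x_{22}^2}{x_{11}^2}.$$ Then $(X,\{e_i\}_{i=0,1,2},\{\gamma_i\}_{i=0,1,2},\{\varepsilon_i\}_{i=0,1,2})$ is a positive geometric crystal for the affine Lie algebra $C_2^{(1)}$.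
   Context: The generalized Cartan matrix $(a_{ij})_{i,j\in\{0,1,2\}}$ of $C_2^{(1)}$ has $a_{ii}=2$, $a_{01}=-1$, $a_{10}=-2$, $a_{12}=-2$, $a_{21}=-1$, $a_{02}=a_{20}=0$. A geometric crystal for an affine Lie algebra with index set $I$ and Cartan matrix $(a_{ij})$ is a quadruple $(X,\{e_i\},\{\gamma_i\},\{\varepsilon_i\})$ where $X$ is an (ind-)variety, $e_i:\mathbb C^\times\times X\to X$, $(c,x)\mapsto e_i^c(x)$, are rational $\mathbb C^\times$-actions, and $\gamma_i,\varepsilon_i:X\to\mathbb C$ are rational functions such that: (1) $\{1\}\times X\cap\mathrm{dom}(e_i)$ is open dense in $\{1\}\times X$; (2) $\gamma_j(e_i^c(x))=c^{a_{ij}}\gamma_j(x)$; (3) $\varepsilon_i(e_i^c(x))=c^{-1}\varepsilon_i(x)$, and $\varepsilon_i(e_j^c(x))=\varepsilon_i(x)$ if $a_{ij}=a_{ji}=0$; (4) $e_i^{c_1}e_j^{c_2}=e_j^{c_2}e_i^{c_1}$ if $a_{ij}=a_{ji}=0$; $e_i^{c_1}e_j^{c_1c_2}e_i^{c_2}=e_j^{c_2}e_i^{c_1c_2}e_j^{c_1}$ if $a_{ij}=a_{ji}=-1$; $e_i^{c_1}e_j^{c_1^2c_2}e_i^{c_1c_2}e_j^{c_2}=e_j^{c_2}e_i^{c_1c_2}e_j^{c_1^2c_2}e_i^{c_1}$ if $a_{ij}=-2,a_{ji}=-1$; and the analogous length-six relation if $a_{ij}=-3,a_{ji}=-1$. It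 is positive if all the maps $e_i^c$ (coordinatewise), $\varepsilon_i$, $\gamma_i$ are given by ratios of polynomials (in the coordinates and $c$) with positive coefficients. *)

theory Defs
  imports "HOL-Analysis.Analysis"
begin

definition cartanC21 :: "nat \<Rightarrow> nat \<Rightarrow> int" where
  "cartanC21 i j =
     (if i = j then 2
      else if (i, j) = (0, 1) then -1
      else if (i, j) = (1, 0) then -2
      else if (i, j) = (1, 2) then -2
      else if (i, j) = (2, 1) then -1
      else 0)"

fun app_word :: "(nat \<Rightarrow> complex \<Rightarrow> 'a \<Rightarrow> 'a) \<Rightarrow> (nat \<times> complex) list \<Rightarrow> 'a \<Rightarrow> 'a" where
  "app_word e [] x = x"
| "app_word e ((i, c) # w) x = e i c (app_word e w x)"

fun defd_word :: "(nat \<Rightarrow> (complex \<times> 'a) set) \<Rightarrow> (nat \<Rightarrow> complex \<Rightarrow> 'a \<Rightarrow> 'a)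
                   \<Rightarrow> (nat \<times> complex) list \<Rightarrow> 'a \<Rightarrow> bool" where
  "defd_word De e [] x = True"
| "defd_word De e ((i, c) # w) x = (defd_word De e w x \<and> (c, app_word e w x) \<in> De i)"

definition word_eq :: "(nat \<Rightarrow> (complex \<times> 'a) set) \<Rightarrow> (nat \<Rightarrow> complex \<Rightarrow> 'a \<Rightarrow> 'a) \<Rightarrow> 'a set
                       \<Rightarrow> (nat \<times> complex) list \<Rightarrow> (nat \<times> complex) list \<Rightarrow> bool" where
  "word_eq De e X v w =
     (\<forall>x\<in>X. defd_word De e v x \<and> defd_word De e w x \<longrightarrow> app_word e v x = app_word e w x)"

definition open_dense_in :: "'a::topological_space set \<Rightarrow> 'a set \<Rightarrow> bool" where
  "open_dense_in D S \<longleftrightarrow> D \<subseteq> S \<and> openin (top_of_set S) D \<and> S \<subseteq> closure D"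

(* The rational maps are represented by functions together with their domains of
   definition De i (for e_i), Dg i (for gamma_i), Deps i (for epsilon_i);
   identities of rational maps are required wherever all terms are defined. *)
definition geometric_crystal ::
  "(nat \<Rightarrow> nat \<Rightarrow> int) \<Rightarrow> nat set \<Rightarrow> 'a::topological_space set
   \<Rightarrow> (nat \<Rightarrow> (complex \<times> 'a) set) \<Rightarrow> (nat \<Rightarrow> complex \<Rightarrow> 'a \<Rightarrow> 'a)
   \<Rightarrow> (nat \<Rightarrow> 'a set) \<Rightarrow> (nat \<Rightarrow> 'a \<Rightarrow> complex)
   \<Rightarrow> (nat \<Rightarrow> 'a set) \<Rightarrow> (nat \<Rightarrow> 'a \<Rightarrow> complex) \<Rightarrow> bool" where
  "geometric_crystal a I X De e Dg gamma Deps eps \<longleftrightarrow>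
     (\<forall>i\<in>I.
        \<comment> \<open>rational maps: domains open dense, e_i maps into X\<close>
        open_dense_in (De i) ((- {0}) \<times> X) \<and>
        (\<forall>(c, x)\<in>De i. e i c x \<in> X) \<and>
        open_dense_in (Dg i) X \<and> open_dense_in (Deps i) X \<and>
        \<comment> \<open>rational C^x-action\<close>
        (\<forall>x\<in>X. (1, x) \<in> De i \<longrightarrow> e i 1 x = x) \<and>
        (\<forall>c1 c2. c1 \<noteq> 0 \<longrightarrow> c2 \<noteq> 0 \<longrightarrow>
            word_eq De e X [(i, c1), (i, c2)] [(i, c1 * c2)]) \<and>
        \<comment> \<open>(1)\<close>
        open_dense_in {x\<in>X. (1, x) \<in> De i} X \<and>
        \<comment> \<open>(2)\<close>
        (\<forall>j\<in>I. \<forall>(c, x)\<in>De i. x \<in> Dg j \<longrightarrow> e i c x \<in> Dg j \<longrightarrow>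
            gamma j (e i c x) = c powi (a i j) * gamma j x) \<and>
        \<comment> \<open>(3)\<close>
        (\<forall>(c, x)\<in>De i. x \<in> Deps i \<longrightarrow> e i c x \<in> Deps i \<longrightarrow>
            eps i (e i c x) = inverse c * eps i x) \<and>
        (\<forall>j\<in>I. a i j = 0 \<and> a j i = 0 \<longrightarrow>
            (\<forall>(c, x)\<in>De j. x \<in> Deps i \<longrightarrow> e j c x \<in> Deps i \<longrightarrow>
               eps i (e j c x) = eps i x)) \<and>
        \<comment> \<open>(4) Verma relations\<close>
        (\<forall>j\<in>I. \<forall>c1 c2. c1 \<noteq> 0 \<longrightarrow> c2 \<noteq> 0 \<longrightarrow>
           (a i j = 0 \<and> a j i = 0 \<longrightarrow>
              word_eq De e X [(i, c1), (j, c2)] [(j, c2), (i, c1)]) \<and>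
           (a i j = -1 \<and> a j i = -1 \<longrightarrow>
              word_eq De e X [(i, c1), (j, c1 * c2), (i, c2)] [(j, c2), (i, c1 * c2), (j, c1)]) \<and>
           (a i j = -2 \<and> a j i = -1 \<longrightarrow>
              word_eq De e X [(i, c1), (j, c1^2 * c2), (i, c1 * c2), (j, c2)]
                             [(j, c2), (i, c1 * c2), (j, c1^2 * c2), (i, c1)]) \<and>
           (a i j = -3 \<and> a j i = -1 \<longrightarrow>
              word_eq De e X
                [(i, c1), (j, c1^3 * c2), (i, c1^2 * c2), (j, c1^3 * c2^2), (i, c1 * c2), (j, c2)]
                [(j, c2), (i, c1 * c2), (j, c1^3 * c2^2), (i, c1^2 * c2), (j, c1^3 * c2), (i, c1)])))"

(* Polynomials with positive real coefficients in variables v!0, ..., v!(n-1):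
   a list of monomials (coefficient, exponent vector). *)
type_synonym pos_poly = "(real \<times> nat list) list"

definition is_pos_poly :: "nat \<Rightarrow> pos_poly \<Rightarrow> bool" where
  "is_pos_poly n P \<longleftrightarrow> (\<forall>(a, es)\<in>set P. a > 0 \<and> length es = n)"

definition eval_poly :: "pos_poly \<Rightarrow> complex list \<Rightarrow> complex" where
  "eval_poly P v = (\<Sum>(a, es)\<leftarrow>P. of_real a * (\<Prod>k<length es. (v ! k) ^ (es ! k)))"

definition pos_ratio_on :: "nat \<Rightarrow> complex list set \<Rightarrow> (complex list \<Rightarrow> complex) \<Rightarrow> bool" where
  "pos_ratio_on n D f \<longleftrightarrow>
     (\<exists>P Q. is_pos_poly n P \<and> is_pos_poly n Q \<and> Q \<noteq> [] \<and>
        (\<forall>v\<in>D. eval_poly Q v \<noteq> 0 \<and> f v = eval_poly P v / eval_poly Q v))"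

type_synonym pt3 = "complex \<times> complex \<times> complex"

definition coord3 :: "nat \<Rightarrow> pt3 \<Rightarrow> complex" where
  "coord3 k p = (case p of (a, b, d) \<Rightarrow> if k = 0 then a else if k = 1 then b else d)"

definition positive_geometric_crystal3 ::
  "(nat \<Rightarrow> nat \<Rightarrow> int) \<Rightarrow> nat set \<Rightarrow> pt3 set
   \<Rightarrow> (nat \<Rightarrow> (complex \<times> pt3) set) \<Rightarrow> (nat \<Rightarrow> complex \<Rightarrow> pt3 \<Rightarrow> pt3)
   \<Rightarrow> (nat \<Rightarrow> pt3 set) \<Rightarrow> (nat \<Rightarrow> pt3 \<Rightarrow> complex)
   \<Rightarrow> (nat \<Rightarrow> pt3 set) \<Rightarrow> (nat \<Rightarrow> pt3 \<Rightarrow> complex) \<Rightarrow> bool" where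
  "positive_geometric_crystal3 a I X De e Dg gamma Deps eps \<longleftrightarrow>
     geometric_crystal a I X De e Dg gamma Deps eps \<and>
     (\<forall>i\<in>I.
        (\<forall>k<3. pos_ratio_on 4 {[c, x0, x1, x2] | c x0 x1 x2. (c, (x0, x1, x2)) \<in> De i}
                 (\<lambda>v. coord3 k (e i (v ! 0) (v ! 1, v ! 2, v ! 3)))) \<and>
        pos_ratio_on 3 {[x0, x1, x2] | x0 x1 x2. (x0, x1, x2) \<in> Dg i}
                 (\<lambda>v. gamma i (v ! 0, v ! 1, v ! 2)) \<and>
        pos_ratio_on 3 {[x0, x1, x2] | x0 x1 x2. (x0, x1, x2) \<in> Deps i}
                 (\<lambda>v. eps i (v ! 0, v ! 1, v ! 2)))"

definition X3 :: "pt3 set" where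
  "X3 = {(x22, x11, x21). x22 \<noteq> 0 \<and> x11 \<noteq> 0 \<and> x21 \<noteq> 0}"

definition cc2 :: "complex \<Rightarrow> pt3 \<Rightarrow> complex" where
  "cc2 c x = (case x of (x22, x11, x21) \<Rightarrow>
      (c * x21 * x22 + x11^2) / (x21 * x22 + x11^2))"

definition eC :: "nat \<Rightarrow> complex \<Rightarrow> pt3 \<Rightarrow> pt3" where
  "eC i c x = (case x of (x22, x11, x21) \<Rightarrow>
      if i = 0 then (cc2 c x / c * x22, x11 / c, x21 / cc2 c x)
      else if i = 1 then (x22, c * x11, x21)
      else (cc2 c x * x22, x11, c / cc2 c x * x21))"

definition DeC :: "nat \<Rightarrow> (complex \<times> pt3) set" where
  "DeC i = (if i = 1 then {(c, x). c \<noteq> 0 \<and> x \<in> X3}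
            else {(c, x). c \<noteq> 0 \<and> x \<in> X3 \<and>
                    (case x of (x22, x11, x21) \<Rightarrow>
                       x21 * x22 + x11^2 \<noteq> 0 \<and> c * x21 * x22 + x11^2 \<noteq> 0)})"

definition epsC :: "nat \<Rightarrow> pt3 \<Rightarrow> complex" where
  "epsC i x = (case x of (x22, x11, x21) \<Rightarrow>
      if i = 0 then x21 + x11^2 / x22
      else if i = 1 then x22 / x11
      else (x21 * x22 + x11^2) / (x22^2 * x21))"

definition gammaC :: "nat \<Rightarrow> pt3 \<Rightarrow> complex" where
  "gammaC i x = (case x of (x22, x11, x21) \<Rightarrow>
      if i = 0 then 1 / x11^2
      else if i = 1 then x11^2 / (x21 * x22)
      else (x21^2 * x22^2) / x11^2)"

end

theory Submission
  imports Defs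
begin

(* In terms of x11 and the product P = x21 x22, the map e_2^c fixes x11, multiplies P by c and x22
   by c_2 = (c P + x11^2) / (P + x11^2); hence c_2 is a multiplicative cocycle and e_2 is an action.
   The map e_0^c is e_2^c followed by the homothety x -> x / c, and all e_i commute with homotheties,
   so every relation involving e_0 follows from the corresponding relation for e_2, the homothety
   factors of both sides being equal. The identities for gamma_i and epsilon_i are direct
   computations, the domains of definition are complements of hypersurfaces, and positivity holds
   because ratios of subtraction-free polynomials are closed under sums, products and quotients. *)

(* Points are written (a, b, d) = (x22, x11, x21). *)
lemma eC_0_eq:
  assumes "d*a + b^2 = N" and "c*d*a + b^2 = M"
  shows "eC 0 c (a, b, d) = (M * a / (c * N), b / c, d * N / M)"
  using assms by (simp add: eC_def cc2_def)

(* The second form is the one produced by simp when it splits i \<in> {0, 1, 2}. *)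
lemma eC_1: "eC 1 c (a, b, d) = (a, c * b, d)" "eC (Suc 0) c (a, b, d) = (a, c * b, d)"
  by (simp_all add: eC_def)

lemma eC_2_eq:
  assumes "d*a + b^2 = N" and "c*d*a + b^2 = M"
  shows "eC 2 c (a, b, d) = (M * a / N, b, c * d * N / M)"
  using assms by (simp add: eC_def cc2_def)

lemma cc2_eq: "cc2 c (a, b, d) = (c * (d*a) + b^2) / (d*a + b^2)"
  by (simp add: cc2_def mult.assoc)

lemma mem_DeC_iff:
  "(c, (a, b, d)) \<in> DeC i \<longleftrightarrow>
     c \<noteq> 0 \<and> a \<noteq> 0 \<and> b \<noteq> 0 \<and> d \<noteq> 0 \<and> (i \<noteq> 1 \<longrightarrow> d*a + b^2 \<noteq> 0 \<and> c*d*a + b^2 \<noteq> 0)"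
  by (auto simp: DeC_def X3_def)

lemma DeC_0_eq_DeC_2: "DeC 0 = DeC 2"
  by (simp add: DeC_def)

lemma DeC_subset: "DeC i \<subseteq> (- {0}) \<times> X3"
  by (auto simp: DeC_def)

lemma eC_maps_to_X3: "(c, x) \<in> DeC i \<Longrightarrow> eC i c x \<in> X3"
  by (cases x) (auto simp: mem_DeC_iff eC_def cc2_def X3_def split: if_splits)

lemma eC_at_1: "(1, x) \<in> DeC i \<Longrightarrow> eC i 1 x = x"
  by (cases x) (auto simp: mem_DeC_iff eC_def cc2_def)

lemma gammaC_eC:
  assumes "i \<in> {0, 1, 2}" and "j \<in> {0, 1, 2}" and "(c, x) \<in> DeC i"
  shows "gammaC j (eC i c x) = c powi cartanC21 i j * gammaC j x"
proof -
  obtain a b d where x: "x = (a, b, d)" by (cases x)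
  define N M where "N = d*a + b^2" and "M = c*d*a + b^2"
  have "c \<noteq> 0" "a \<noteq> 0" "b \<noteq> 0" "d \<noteq> 0" "i \<noteq> 1 \<Longrightarrow> N \<noteq> 0" "i \<noteq> 1 \<Longrightarrow> M \<noteq> 0"
    using assms(3) by (simp_all add: x mem_DeC_iff N_def M_def)
  with assms(1,2) show ?thesis
    by (auto simp: x eC_0_eq[OF N_def[symmetric] M_def[symmetric]] eC_1
        eC_2_eq[OF N_def[symmetric] M_def[symmetric]] gammaC_def cartanC21_def power_int_minus
        field_simps power2_eq_square)
qed

lemma epsC_eC:
  assumes "i \<in> {0, 1, 2}" and "(c, x) \<in> DeC i"
  shows "epsC i (eC i c x) = inverse c * epsC i x"
proof -
  obtain a b d where x: "x = (a, b, d)" by (cases x)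
  define N M where "N = d*a + b^2" and "M = c*d*a + b^2"
  have "c \<noteq> 0" "a \<noteq> 0" "b \<noteq> 0" "d \<noteq> 0" "i \<noteq> 1 \<Longrightarrow> N \<noteq> 0" "i \<noteq> 1 \<Longrightarrow> M \<noteq> 0"
    using assms(2) by (simp_all add: x mem_DeC_iff N_def M_def)
  with assms(1) show ?thesis
    by (auto simp: x eC_0_eq[OF N_def[symmetric] M_def[symmetric]] eC_1
        eC_2_eq[OF N_def[symmetric] M_def[symmetric]] epsC_def field_simps)
       (simp_all add: N_def M_def algebra_simps power2_eq_square)
qed

lemma epsC_eC_commute:
  assumes "(c, x) \<in> DeC 2"
  shows "epsC 0 (eC 2 c x) = epsC 0 x" and "epsC 2 (eC 0 c x) = epsC 2 x"
proof -
  obtain a b d where x: "x = (a, b, d)" by (cases x)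
  define N M where "N = d*a + b^2" and "M = c*d*a + b^2"
  have "c \<noteq> 0" "a \<noteq> 0" "b \<noteq> 0" "d \<noteq> 0" "N \<noteq> 0" "M \<noteq> 0"
    using assms by (simp_all add: x mem_DeC_iff N_def M_def)
  then show "epsC 0 (eC 2 c x) = epsC 0 x" and "epsC 2 (eC 0 c x) = epsC 2 x"
    by (simp_all add: x eC_0_eq[OF N_def[symmetric] M_def[symmetric]]
        eC_2_eq[OF N_def[symmetric] M_def[symmetric]] epsC_def field_simps)
       (simp_all add: N_def M_def algebra_simps power2_eq_square)
qed

lemma epsC_eC_orthogonal:
  assumes "i \<in> {0, 1, 2}" and "j \<in> {0, 1, 2}" and "cartanC21 i j = 0" and "cartanC21 j i = 0"
    and "(c, x) \<in> DeC j"
  shows "epsC i (eC j c x) = epsC i x"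
proof -
  from assms(1-4) have "(i, j) = (0, 2) \<or> (i, j) = (2, 0)"
    by (auto simp: cartanC21_def)
  with assms(5) show ?thesis
    using epsC_eC_commute[of c x] DeC_0_eq_DeC_2 by auto
qed

lemma cc2_cocycle:
  assumes "(c2, x) \<in> DeC 2"
  shows "cc2 c1 (eC 2 c2 x) * cc2 c2 x = cc2 (c1 * c2) x"
proof -
  obtain a b d where x: "x = (a, b, d)" by (cases x)
  define N M where "N = d*a + b^2" and "M = c2 * (d*a) + b^2"
  have nz: "N \<noteq> 0" "M \<noteq> 0"
    using assms by (simp_all add: x mem_DeC_iff N_def M_def mult.assoc)
  have e2: "eC 2 c2 x = (M*a/N, b, c2*d*N/M)"
    by (simp add: x eC_def cc2_eq N_def M_def)
  have "c2*d*N/M * (M*a/N) = c2 * (d*a)"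
    using nz by simp
  then have "cc2 c1 (eC 2 c2 x) = (c1 * (c2 * (d*a)) + b^2) / M"
    unfolding e2 cc2_eq M_def by simp
  with nz show ?thesis
    by (simp add: x cc2_eq M_def N_def mult.assoc)
qed

lemma eC_2_eC_2:
  assumes "(c2, x) \<in> DeC 2"
  shows "eC 2 c1 (eC 2 c2 x) = eC 2 (c1 * c2) x"
proof -
  obtain a b d where x: "x = (a, b, d)" by (cases x)
  have "cc2 c2 x \<noteq> 0"
    using assms by (simp add: x mem_DeC_iff cc2_def)
  with cc2_cocycle[OF assms, of c1] show ?thesis
    by (auto simp: x eC_def field_simps)
qed

lemma eC_1_action: "word_eq DeC eC X3 [(1, c1), (1, c2)] [(1, c1 * c2)]"
  by (auto simp: word_eq_def eC_def)

lemma eC_2_action: "word_eq DeC eC X3 [(2, c1), (2, c2)] [(2, c1 * c2)]"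
  by (simp add: word_eq_def eC_2_eC_2)

lemma eC_2_commute: "word_eq DeC eC X3 [(2, c1), (2, c2)] [(2, c2), (2, c1)]"
  by (simp add: word_eq_def eC_2_eC_2 mult.commute)

(* Both sides equal (c1^2 c2 M x22 / K, c1^2 c2 x11, c2 x21 K / M),
   where M = c2 x21 x22 + x11^2 and K = x21 x22 + c1^2 c2 x11^2. *)
lemma verma_1_2:
  "word_eq DeC eC X3 [(1, c1), (2, c1^2 * c2), (1, c1 * c2), (2, c2)]
                     [(2, c2), (1, c1 * c2), (2, c1^2 * c2), (1, c1)]"
  unfolding word_eq_def
  by (clarsimp simp: eC_1 eC_2_eq[OF refl refl] mem_DeC_iff, simp add: frac_eq_eq,
      simp add: algebra_simps power2_eq_square)

section \<open>Reduction of e_0 to e_2\<close>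

definition homothety :: "complex \<Rightarrow> pt3 \<Rightarrow> pt3" where
  "homothety t x = (case x of (a, b, d) \<Rightarrow> (t * a, t * b, t * d))"

lemma homothety_1 [simp]: "homothety 1 x = x"
  by (cases x) (simp add: homothety_def)

lemma homothety_homothety [simp]: "homothety s (homothety t x) = homothety (s * t) x"
  by (cases x) (simp add: homothety_def)

lemma cc2_homothety:
  assumes "t \<noteq> 0"
  shows "cc2 c (homothety t x) = cc2 c x"
proof (cases x)
  case (fields a b d)
  have "cc2 c (homothety t x) = (t^2 * (c*d*a + b^2)) / (t^2 * (d*a + b^2))"
    by (simp add: fields homothety_def cc2_def algebra_simps power2_eq_square)
  with assms show ?thesis
    by (simp add: fields cc2_def)
qed

lemma eC_homothety:
  assumes "t \<noteq> 0"
  shows "eC i c (homothety t x) = homothety t (eC i c x)"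
proof (cases x)
  case (fields a b d)
  have "cc2 c (t * a, t * b, t * d) = cc2 c (a, b, d)"
    using cc2_homothety[OF assms, of c x] by (simp add: fields homothety_def)
  with assms show ?thesis
    by (simp add: fields eC_def homothety_def)
qed

lemma homothety_mem_DeC_iff:
  assumes "t \<noteq> 0"
  shows "(c, homothety t x) \<in> DeC i \<longleftrightarrow> (c, x) \<in> DeC i"
proof (cases x)
  case (fields a b d)
  have "t * d * (t * a) + (t * b)^2 = t^2 * (d*a + b^2)"
       "c * (t * d) * (t * a) + (t * b)^2 = t^2 * (c*d*a + b^2)"
    by (simp_all add: algebra_simps power2_eq_square)
  with assms show ?thesis
    by (simp add: fields homothety_def mem_DeC_iff)
qed

lemma eC_0_eq_homothety_eC_2: "c \<noteq> 0 \<Longrightarrow> eC 0 c x = homothety (inverse c) (eC 2 c x)"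
  by (cases x) (simp add: eC_def homothety_def field_simps)

fun e0_to_e2 :: "(nat \<times> complex) list \<Rightarrow> (nat \<times> complex) list" where
  "e0_to_e2 [] = []"
| "e0_to_e2 ((i, c) # w) = (if i = 0 then 2 else i, c) # e0_to_e2 w"

fun e0_weight :: "(nat \<times> complex) list \<Rightarrow> complex" where
  "e0_weight [] = 1"
| "e0_weight ((i, c) # w) = (if i = 0 then inverse c else 1) * e0_weight w"

lemma app_word_e0_to_e2:
  assumes "defd_word DeC eC w x"
  shows "defd_word DeC eC (e0_to_e2 w) x \<and> e0_weight w \<noteq> 0 \<and>
         app_word eC w x = homothety (e0_weight w) (app_word eC (e0_to_e2 w) x)"
  using assms
proof (induction w)
  case Nil
  then show ?case by simp
next
  case (Cons l w)
  obtain i c where l: "l = (i, c)" by (cases l)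
  define t y where "t = e0_weight w" and "y = app_word eC (e0_to_e2 w) x"
  from Cons have defd: "defd_word DeC eC (e0_to_e2 w) x" and "t \<noteq> 0"
    and app: "app_word eC w x = homothety t y" and "(c, homothety t y) \<in> DeC i"
    by (simp_all add: l t_def y_def)
  then have "(c, y) \<in> DeC i"
    by (simp add: homothety_mem_DeC_iff)
  then have "c \<noteq> 0" and "(c, y) \<in> DeC (if i = 0 then 2 else i)"
    by (cases y, simp add: mem_DeC_iff, auto simp: DeC_0_eq_DeC_2)
  with defd \<open>t \<noteq> 0\<close> show ?case
    by (simp add: l app eC_homothety eC_0_eq_homothety_eC_2 mult.commute flip: t_def y_def)
qed

lemma word_eq_e0_to_e2:
  assumes "e0_weight v = e0_weight w" and "word_eq DeC eC X3 (e0_to_e2 v) (e0_to_e2 w)"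
  shows "word_eq DeC eC X3 v w"
  using assms app_word_e0_to_e2 unfolding word_eq_def by metis

lemma eC_0_action: "word_eq DeC eC X3 [(0, c1), (0, c2)] [(0, c1 * c2)]"
  by (rule word_eq_e0_to_e2) (simp_all add: eC_2_action)

lemma eC_0_eC_2_commute: "word_eq DeC eC X3 [(0, c1), (2, c2)] [(2, c2), (0, c1)]"
  by (rule word_eq_e0_to_e2) (simp_all add: eC_2_commute)

lemma eC_2_eC_0_commute: "word_eq DeC eC X3 [(2, c1), (0, c2)] [(0, c2), (2, c1)]"
  by (rule word_eq_e0_to_e2) (simp_all add: eC_2_commute)

lemma verma_1_0:
  "word_eq DeC eC X3 [(1, c1), (0, c1^2 * c2), (1, c1 * c2), (0, c2)]
                     [(0, c2), (1, c1 * c2), (0, c1^2 * c2), (1, c1)]"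
  by (rule word_eq_e0_to_e2) (simp add: mult.commute, simp add: verma_1_2[unfolded One_nat_def])

section \<open>Domains of definition\<close>

lemma X3_eq_Collect: "X3 = {x. fst x \<noteq> 0 \<and> fst (snd x) \<noteq> 0 \<and> snd (snd x) \<noteq> 0}"
  by (auto simp: X3_def)

lemma open_DeC: "open (DeC i)"
proof -
  let ?N = "\<lambda>p::complex \<times> pt3. snd (snd (snd p)) * fst (snd p) + (fst (snd (snd p)))^2"
  let ?M = "\<lambda>p::complex \<times> pt3. fst p * snd (snd (snd p)) * fst (snd p) + (fst (snd (snd p)))^2"
  have "DeC i = {p. fst p \<noteq> 0 \<and> snd p \<in> X3 \<and> (i \<noteq> 1 \<longrightarrow> ?N p \<noteq> 0 \<and> ?M p \<noteq> 0)}"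
    by (auto simp: DeC_def)
  also have "open \<dots>"
    unfolding X3_eq_Collect
    by (cases "i = 1") (simp_all, (intro open_Collect_conj open_Collect_neq continuous_intros)+)
  finally show ?thesis .
qed

lemma eventually_affine_neq_0:
  fixes \<alpha> \<beta> :: "'a::real_normed_field"
  assumes "\<alpha> \<noteq> 0"
  shows "\<forall>\<^sub>F t in at 0. \<alpha> * t + \<beta> \<noteq> 0"
  using eventually_neq_at_within[of "- \<beta> / \<alpha>" 0 UNIV]
  by eventually_elim (metis assms eq_neg_iff_add_eq_0 nonzero_mult_div_cancel_left)

lemma eventually_perturbed_in_DeC:
  assumes "c \<noteq> 0" and "(a, b, d) \<in> X3"
  shows "\<forall>\<^sub>F t in at 0. (c, (a, b, d + t)) \<in> DeC i"
proof -
  have nz: "a \<noteq> 0" "b \<noteq> 0" "d \<noteq> 0"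
    using assms(2) by (simp_all add: X3_def)
  have "\<forall>\<^sub>F t in at 0. 1 * t + d \<noteq> 0" "\<forall>\<^sub>F t in at 0. a * t + (d*a + b^2) \<noteq> 0"
    "\<forall>\<^sub>F t in at 0. (c*a) * t + (c*d*a + b^2) \<noteq> 0"
    by (rule eventually_affine_neq_0, use assms(1) nz in simp)+
  then show ?thesis
    by eventually_elim (use assms nz in \<open>auto simp: mem_DeC_iff algebra_simps\<close>)
qed

lemma in_closure_if_eventually:
  assumes "(f \<longlongrightarrow> p) F" and "\<forall>\<^sub>F t in F. f t \<in> S" and "F \<noteq> bot"
  shows "p \<in> closure S"
  using closed_closure _ assms(3,1)
proof (rule Lim_in_closed_set)
  show "\<forall>\<^sub>F t in F. f t \<in> closure S"
    using assms(2) by eventually_elim (use closure_subset in blast)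
qed

lemma open_dense_in_DeC: "open_dense_in (DeC i) ((- {0}) \<times> X3)"
proof -
  have "(- {0}) \<times> X3 \<subseteq> closure (DeC i)"
  proof
    fix p :: "complex \<times> pt3"
    assume "p \<in> (- {0}) \<times> X3"
    then obtain c a b d where p: "p = (c, (a, b, d))" "c \<noteq> 0" "(a, b, d) \<in> X3"
      by (cases p) auto
    have "((\<lambda>t. (c, (a, b, d + t))) \<longlongrightarrow> p) (at 0)"
      unfolding p by (auto intro!: tendsto_eq_intros)
    then show "p \<in> closure (DeC i)"
      using eventually_perturbed_in_DeC[OF p(2,3)] by (rule in_closure_if_eventually) simp
  qed
  with DeC_subset open_DeC show ?thesis
    by (simp add: open_dense_in_def open_subset)
qed

lemma open_dense_in_DeC_at_1: "open_dense_in {x \<in> X3. (1, x) \<in> DeC i} X3"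
proof -
  have eq: "{x \<in> X3. (1, x) \<in> DeC i} = Pair 1 -` DeC i"
    using DeC_subset by auto
  have "X3 \<subseteq> closure (Pair 1 -` DeC i)"
  proof
    fix x assume "x \<in> X3"
    then obtain a b d where x: "x = (a, b, d)" "(a, b, d) \<in> X3"
      by (cases x) auto
    have "((\<lambda>t. (a, b, d + t)) \<longlongrightarrow> x) (at 0)"
      unfolding x by (auto intro!: tendsto_eq_intros)
    then show "x \<in> closure (Pair 1 -` DeC i)"
      by (rule in_closure_if_eventually) (use eventually_perturbed_in_DeC[OF one_neq_zero x(2)] in simp_all)
  qed
  moreover have "open (Pair 1 -` DeC i)"
    using open_DeC by (rule continuous_open_vimage) (intro continuous_intros)
  moreover have "Pair 1 -` DeC i \<subseteq> X3"
    using DeC_subset by auto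
  ultimately show ?thesis
    unfolding eq open_dense_in_def by (simp add: open_subset)
qed

lemma open_dense_in_X3: "open_dense_in X3 X3"
  by (simp add: open_dense_in_def closure_subset)

section \<open>Subtraction-free rational functions\<close>

definition monomial_val :: "nat list \<Rightarrow> complex list \<Rightarrow> complex" where
  "monomial_val es v = (\<Prod>k<length es. v ! k ^ (es ! k))"

lemma monomial_val_add:
  assumes "length es = length fs"
  shows "monomial_val (map2 (+) es fs) v = monomial_val es v * monomial_val fs v"
  using assms by (simp add: monomial_val_def power_add prod.distrib)

lemma eval_poly_Nil [simp]: "eval_poly [] v = 0"
  by (simp add: eval_poly_def)

lemma eval_poly_Cons [simp]: "eval_poly ((a, es) # P) v = of_real a * monomial_val es v + eval_poly P v"
  by (simp add: eval_poly_def monomial_val_def)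

lemma eval_poly_append [simp]: "eval_poly (P @ Q) v = eval_poly P v + eval_poly Q v"
  by (simp add: eval_poly_def)

lemma is_pos_poly_Nil [simp]: "is_pos_poly n []"
  by (simp add: is_pos_poly_def)

lemma is_pos_poly_Cons [simp]:
  "is_pos_poly n ((a, es) # P) \<longleftrightarrow> a > 0 \<and> length es = n \<and> is_pos_poly n P"
  by (simp add: is_pos_poly_def)

lemma is_pos_poly_append [simp]: "is_pos_poly n (P @ Q) \<longleftrightarrow> is_pos_poly n P \<and> is_pos_poly n Q"
  by (auto simp: is_pos_poly_def)

definition poly_one :: "nat \<Rightarrow> pos_poly" where
  "poly_one n = [(1, replicate n 0)]"

lemma eval_poly_one [simp]: "eval_poly (poly_one n) v = 1"
  by (simp add: poly_one_def monomial_val_def)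

lemma is_pos_poly_one [simp]: "is_pos_poly n (poly_one n)"
  by (simp add: poly_one_def)

lemma poly_one_neq_Nil [simp]: "poly_one n \<noteq> []"
  by (simp add: poly_one_def)

fun poly_mult :: "pos_poly \<Rightarrow> pos_poly \<Rightarrow> pos_poly" where
  "poly_mult [] Q = []"
| "poly_mult ((a, es) # P) Q = map (\<lambda>(b, fs). (a * b, map2 (+) es fs)) Q @ poly_mult P Q"

lemma poly_mult_eq_Nil_iff: "poly_mult P Q = [] \<longleftrightarrow> P = [] \<or> Q = []"
  by (induction P Q rule: poly_mult.induct) auto

lemma is_pos_poly_mult:
  assumes "is_pos_poly n P" and "is_pos_poly n Q"
  shows "is_pos_poly n (poly_mult P Q)"
  using assms by (induction P Q rule: poly_mult.induct) (auto simp: is_pos_poly_def)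

lemma eval_poly_mult:
  assumes "is_pos_poly n P" and "is_pos_poly n Q"
  shows "eval_poly (poly_mult P Q) v = eval_poly P v * eval_poly Q v"
  using assms
proof (induction P Q rule: poly_mult.induct)
  case (2 a es P Q)
  have "eval_poly (map (\<lambda>(b, fs). (a * b, map2 (+) es fs)) Q) v
          = of_real a * monomial_val es v * eval_poly Q v"
    using \<open>is_pos_poly n Q\<close> 2(2)
    by (induction Q) (auto simp: monomial_val_add algebra_simps)
  with 2 show ?case
    by (simp add: algebra_simps)
qed simp

lemma pos_ratio_onI:
  assumes "is_pos_poly n P" and "is_pos_poly n Q" and "Q \<noteq> []"
    and "\<And>v. v \<in> D \<Longrightarrow> eval_poly Q v \<noteq> 0 \<and> f v = eval_poly P v / eval_poly Q v"
  shows "pos_ratio_on n D f"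
  using assms unfolding pos_ratio_on_def by blast

lemma pos_ratio_on_1: "pos_ratio_on n D (\<lambda>v. 1)"
  by (rule pos_ratio_onI[of n "poly_one n" "poly_one n"]) simp_all

lemma pos_ratio_on_var:
  assumes "k < n"
  shows "pos_ratio_on n D (\<lambda>v. v ! k)"
proof (rule pos_ratio_onI[of n "[(1, (replicate n 0)[k := 1])]" "poly_one n"])
  have "monomial_val ((replicate n 0)[k := 1]) v = v ! k" for v
    using assms by (simp add: monomial_val_def nth_list_update if_distrib prod.If_cases lessThan_def)
  then show "eval_poly (poly_one n) v \<noteq> 0 \<and>
      v ! k = eval_poly [(1, (replicate n 0)[k := 1])] v / eval_poly (poly_one n) v" for v
    by simp
qed simp_all

lemma pos_ratio_on_add:
  assumes "pos_ratio_on n D f" and "pos_ratio_on n D g"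
  shows "pos_ratio_on n D (\<lambda>v. f v + g v)"
proof -
  obtain P1 Q1 where 1: "is_pos_poly n P1" "is_pos_poly n Q1" "Q1 \<noteq> []"
    "\<forall>v\<in>D. eval_poly Q1 v \<noteq> 0 \<and> f v = eval_poly P1 v / eval_poly Q1 v"
    using assms(1) unfolding pos_ratio_on_def by blast
  obtain P2 Q2 where 2: "is_pos_poly n P2" "is_pos_poly n Q2" "Q2 \<noteq> []"
    "\<forall>v\<in>D. eval_poly Q2 v \<noteq> 0 \<and> g v = eval_poly P2 v / eval_poly Q2 v"
    using assms(2) unfolding pos_ratio_on_def by blast
  show ?thesis
    by (rule pos_ratio_onI[of n "poly_mult P1 Q2 @ poly_mult P2 Q1" "poly_mult Q1 Q2"])
       (use 1 2 in \<open>simp_all add: is_pos_poly_mult eval_poly_mult poly_mult_eq_Nil_iff add_frac_eq\<close>)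
qed

lemma pos_ratio_on_mult:
  assumes "pos_ratio_on n D f" and "pos_ratio_on n D g"
  shows "pos_ratio_on n D (\<lambda>v. f v * g v)"
proof -
  obtain P1 Q1 where 1: "is_pos_poly n P1" "is_pos_poly n Q1" "Q1 \<noteq> []"
    "\<forall>v\<in>D. eval_poly Q1 v \<noteq> 0 \<and> f v = eval_poly P1 v / eval_poly Q1 v"
    using assms(1) unfolding pos_ratio_on_def by blast
  obtain P2 Q2 where 2: "is_pos_poly n P2" "is_pos_poly n Q2" "Q2 \<noteq> []"
    "\<forall>v\<in>D. eval_poly Q2 v \<noteq> 0 \<and> g v = eval_poly P2 v / eval_poly Q2 v"
    using assms(2) unfolding pos_ratio_on_def by blast
  show ?thesis
    by (rule pos_ratio_onI[of n "poly_mult P1 P2" "poly_mult Q1 Q2"])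
       (use 1 2 in \<open>simp_all add: is_pos_poly_mult eval_poly_mult poly_mult_eq_Nil_iff\<close>)
qed

lemma pos_ratio_on_divide:
  assumes "pos_ratio_on n D f" and "pos_ratio_on n D g" and "\<And>v. v \<in> D \<Longrightarrow> g v \<noteq> 0"
  shows "pos_ratio_on n D (\<lambda>v. f v / g v)"
proof (cases "D = {}")
  case True
  then show ?thesis
    by (intro pos_ratio_onI[of n "poly_one n" "poly_one n"]) simp_all
next
  case False
  obtain P1 Q1 where 1: "is_pos_poly n P1" "is_pos_poly n Q1" "Q1 \<noteq> []"
    "\<forall>v\<in>D. eval_poly Q1 v \<noteq> 0 \<and> f v = eval_poly P1 v / eval_poly Q1 v"
    using assms(1) unfolding pos_ratio_on_def by blast
  obtain P2 Q2 where 2: "is_pos_poly n P2" "is_pos_poly n Q2" "Q2 \<noteq> []"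
    "\<forall>v\<in>D. eval_poly Q2 v \<noteq> 0 \<and> g v = eval_poly P2 v / eval_poly Q2 v"
    using assms(2) unfolding pos_ratio_on_def by blast
  have P2_nz: "eval_poly P2 v \<noteq> 0" if "v \<in> D" for v
    using assms(3)[OF that] 2(4) that by auto
  with False have "P2 \<noteq> []"
    by fastforce
  show ?thesis
    by (rule pos_ratio_onI[of n "poly_mult P1 Q2" "poly_mult Q1 P2"])
       (use 1 2 P2_nz \<open>P2 \<noteq> []\<close> in \<open>simp_all add: is_pos_poly_mult eval_poly_mult poly_mult_eq_Nil_iff\<close>)
qed

lemma pos_ratio_on_power:
  assumes "pos_ratio_on n D f"
  shows "pos_ratio_on n D (\<lambda>v. f v ^ m)"
  by (induction m) (simp_all add: pos_ratio_on_1 pos_ratio_on_mult assms)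

lemmas pos_ratio_on_intros =
  pos_ratio_on_1 pos_ratio_on_var pos_ratio_on_add pos_ratio_on_mult pos_ratio_on_divide pos_ratio_on_power

lemma pos_ratio_on_eC:
  assumes "i \<in> {0, 1, 2}" and "k < 3"
  shows "pos_ratio_on 4 {[c, x0, x1, x2] | c x0 x1 x2. (c, (x0, x1, x2)) \<in> DeC i}
           (\<lambda>v. coord3 k (eC i (v ! 0) (v ! 1, v ! 2, v ! 3)))"
proof -
  have "k = 0 \<or> k = 1 \<or> k = 2"
    using assms(2) by auto
  with assms(1) show ?thesis
    by (auto simp: coord3_def eC_0_eq[OF refl refl] eC_1 eC_2_eq[OF refl refl] mem_DeC_iff
        intro!: pos_ratio_on_intros)
qed

lemma pos_ratio_on_gammaC:
  assumes "i \<in> {0, 1, 2}"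
  shows "pos_ratio_on 3 {[x0, x1, x2] | x0 x1 x2. (x0, x1, x2) \<in> X3} (\<lambda>v. gammaC i (v ! 0, v ! 1, v ! 2))"
  using assms by (auto simp: gammaC_def X3_def intro!: pos_ratio_on_intros)

lemma pos_ratio_on_epsC:
  assumes "i \<in> {0, 1, 2}"
  shows "pos_ratio_on 3 {[x0, x1, x2] | x0 x1 x2. (x0, x1, x2) \<in> X3} (\<lambda>v. epsC i (v ! 0, v ! 1, v ! 2))"
  using assms by (auto simp: epsC_def X3_def intro!: pos_ratio_on_intros)

lemma cartanC21_diag: "cartanC21 i i = 2"
  by (simp add: cartanC21_def)

lemma eC_action:
  assumes "i \<in> {0, 1, 2}"
  shows "word_eq DeC eC X3 [(i, c1), (i, c2)] [(i, c1 * c2)]"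
  using assms eC_0_action eC_1_action eC_2_action by auto

lemma verma_relations:
  assumes "i \<in> {0, 1, 2}" and "j \<in> {0, 1, 2}"
  shows "(cartanC21 i j = 0 \<and> cartanC21 j i = 0 \<longrightarrow>
            word_eq DeC eC X3 [(i, c1), (j, c2)] [(j, c2), (i, c1)]) \<and>
         (cartanC21 i j = -1 \<and> cartanC21 j i = -1 \<longrightarrow>
            word_eq DeC eC X3 [(i, c1), (j, c1 * c2), (i, c2)] [(j, c2), (i, c1 * c2), (j, c1)]) \<and>
         (cartanC21 i j = -2 \<and> cartanC21 j i = -1 \<longrightarrow>
            word_eq DeC eC X3 [(i, c1), (j, c1^2 * c2), (i, c1 * c2), (j, c2)]
                              [(j, c2), (i, c1 * c2), (j, c1^2 * c2), (i, c1)]) \<and>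
         (cartanC21 i j = -3 \<and> cartanC21 j i = -1 \<longrightarrow>
            word_eq DeC eC X3
              [(i, c1), (j, c1^3 * c2), (i, c1^2 * c2), (j, c1^3 * c2^2), (i, c1 * c2), (j, c2)]
              [(j, c2), (i, c1 * c2), (j, c1^3 * c2^2), (i, c1^2 * c2), (j, c1^3 * c2), (i, c1)])"
  using assms eC_0_eC_2_commute eC_2_eC_0_commute verma_1_0 verma_1_2
  by (auto simp: cartanC21_def)

lemma geometric_crystal_C21:
  "geometric_crystal cartanC21 {0, 1, 2} X3 DeC eC (\<lambda>_. X3) gammaC (\<lambda>_. X3) epsC"
  unfolding geometric_crystal_def
  by (intro ballI conjI allI impI)
     (auto simp: open_dense_in_DeC open_dense_in_X3 open_dense_in_DeC_at_1 eC_maps_to_X3 eC_at_1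
        eC_action gammaC_eC epsC_eC epsC_eC_orthogonal verma_relations cartanC21_diag)

theorem mainTheorem3:
  shows "positive_geometric_crystal3 cartanC21 {0, 1, 2} X3 DeC eC
           (\<lambda>_. X3) gammaC (\<lambda>_. X3) epsC"
  unfolding positive_geometric_crystal3_def
  using geometric_crystal_C21 pos_ratio_on_eC pos_ratio_on_gammaC pos_ratio_on_epsC by blast

end
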